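(* Let $Q$ be a finite loop with the antiautomorphic inverse property and let $S$ be a subloop of $Q$. Let \[ \mathcal{L}(Q,S)=\Big\{\bigcap_{x\in X} xS : \emptyset\neq X\subseteq Q\Big\},\qquad \mathcal{R}(Q,S)=\Big\{\bigcap_{x\in X} Sx : \emptyset\neq X\subseteq Q\Big\}, \] each partially ordered by inclusion (they are meet-semilattices with meet given by intersection, in which the cosets are the maximal elements). Then the mapping $xS\mapsto Sx^{-1}$ (from left cosets to right cosets of $S$) is well-defined, and it extends uniquely to an isomorphism of meet-semilattices $\mathcal{L}(Q,S)\to\mathcal{R}(Q,S)$.
   Context: A loop $Q$ has the antiautomorphic inverse property if for every $x\in Q$ there is $x^{-1}\in Q$ with $xx^{-1}=1=x^{-1}x$, and $(xy)^{-1}=y^{-1}x^{-1}$ for all $x,y\in Q$. For a subloop $S\le Q$ and $x\in Q$, $xS=\{xs:s\in S\}$ and $Sx=\{sx:s\in S\}$. An isomorphism of meet-semilattices is a bijection $g$ with $g(a\wedge b)=g(a)\wedge g(b)$. *)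

theory Defs
  imports Main
begin

definition loop :: "'a set \<Rightarrow> ('a \<Rightarrow> 'a \<Rightarrow> 'a) \<Rightarrow> 'a \<Rightarrow> bool" where
  "loop Q m e \<longleftrightarrow> e \<in> Q \<and> (\<forall>x\<in>Q. \<forall>y\<in>Q. m x y \<in> Q) \<and>
     (\<forall>x\<in>Q. m e x = x \<and> m x e = x) \<and>
     (\<forall>a\<in>Q. \<forall>b\<in>Q. \<exists>!x. x \<in> Q \<and> m a x = b) \<and>
     (\<forall>a\<in>Q. \<forall>b\<in>Q. \<exists>!y. y \<in> Q \<and> m y a = b)"

definition loop_inv :: "'a set \<Rightarrow> ('a \<Rightarrow> 'a \<Rightarrow> 'a) \<Rightarrow> 'a \<Rightarrow> 'a \<Rightarrow> 'a" where
  "loop_inv Q m e x = (THE y. y \<in> Q \<and> m x y = e \<and> m y x = e)"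

definition aaip :: "'a set \<Rightarrow> ('a \<Rightarrow> 'a \<Rightarrow> 'a) \<Rightarrow> 'a \<Rightarrow> bool" where
  "aaip Q m e \<longleftrightarrow> (\<forall>x\<in>Q. \<exists>y\<in>Q. m x y = e \<and> m y x = e) \<and>
     (\<forall>x\<in>Q. \<forall>y\<in>Q. loop_inv Q m e (m x y) = m (loop_inv Q m e y) (loop_inv Q m e x))"

definition subloop :: "'a set \<Rightarrow> 'a set \<Rightarrow> ('a \<Rightarrow> 'a \<Rightarrow> 'a) \<Rightarrow> 'a \<Rightarrow> bool" where
  "subloop S Q m e \<longleftrightarrow> S \<subseteq> Q \<and> e \<in> S \<and> (\<forall>x\<in>S. \<forall>y\<in>S. m x y \<in> S) \<and>
     (\<forall>a\<in>S. \<forall>b\<in>S. \<exists>x\<in>S. m a x = b) \<and> (\<forall>a\<in>S. \<forall>b\<in>S. \<exists>y\<in>S. m y a = b)"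

definition lcoset :: "('a \<Rightarrow> 'a \<Rightarrow> 'a) \<Rightarrow> 'a \<Rightarrow> 'a set \<Rightarrow> 'a set" where
  "lcoset m x S = (\<lambda>s. m x s) ` S"

definition rcoset :: "('a \<Rightarrow> 'a \<Rightarrow> 'a) \<Rightarrow> 'a set \<Rightarrow> 'a \<Rightarrow> 'a set" where
  "rcoset m S x = (\<lambda>s. m s x) ` S"

definition Lsets :: "'a set \<Rightarrow> ('a \<Rightarrow> 'a \<Rightarrow> 'a) \<Rightarrow> 'a set \<Rightarrow> 'a set set" where
  "Lsets Q m S = {(\<Inter>x\<in>X. lcoset m x S) | X. X \<noteq> {} \<and> X \<subseteq> Q}"

definition Rsets :: "'a set \<Rightarrow> ('a \<Rightarrow> 'a \<Rightarrow> 'a) \<Rightarrow> 'a set \<Rightarrow> 'a set set" where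
  "Rsets Q m S = {(\<Inter>x\<in>X. rcoset m S x) | X. X \<noteq> {} \<and> X \<subseteq> Q}"

definition meet_iso :: "('a set \<Rightarrow> 'a set) \<Rightarrow> 'a set set \<Rightarrow> 'a set set \<Rightarrow> bool" where
  "meet_iso g L R \<longleftrightarrow> bij_betw g L R \<and> (\<forall>A\<in>L. \<forall>B\<in>L. g (A \<inter> B) = g A \<inter> g B)"

end

theory Submission
  imports Defs
begin

text \<open>Inversion is an injective antiautomorphism of Q mapping S onto itself, so it maps each left
  coset xS onto the right coset S x\<inverse>. Being injective, it commutes with intersections, hence maps
  L(Q,S) onto R(Q,S) preserving meets. Every element of L(Q,S) is a finite meet of cosets (Q is
  finite), so a meet-isomorphism is determined by its values on the cosets.\<close>

lemma loop_closed: "loop Q m e \<Longrightarrow> x \<in> Q \<Longrightarrow> y \<in> Q \<Longrightarrow> m x y \<in> Q"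
  by (simp add: loop_def)

lemma loop_ident_in: "loop Q m e \<Longrightarrow> e \<in> Q"
  by (simp add: loop_def)

lemma loop_right_div_unique:
  "loop Q m e \<Longrightarrow> a \<in> Q \<Longrightarrow> b \<in> Q \<Longrightarrow> \<exists>!x. x \<in> Q \<and> m a x = b"
  by (simp add: loop_def)

lemma aaip_inverse_exists: "aaip Q m e \<Longrightarrow> x \<in> Q \<Longrightarrow> \<exists>y\<in>Q. m x y = e \<and> m y x = e"
  by (simp add: aaip_def)

lemma aaip_loop_inv_mult:
  "aaip Q m e \<Longrightarrow> x \<in> Q \<Longrightarrow> y \<in> Q \<Longrightarrow> loop_inv Q m e (m x y) = m (loop_inv Q m e y) (loop_inv Q m e x)"
  by (simp add: aaip_def)

lemma subloop_subset: "subloop S Q m e \<Longrightarrow> S \<subseteq> Q"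
  by (simp add: subloop_def)

lemma subloop_ident_in: "subloop S Q m e \<Longrightarrow> e \<in> S"
  by (simp add: subloop_def)

lemma subloop_right_div: "subloop S Q m e \<Longrightarrow> a \<in> S \<Longrightarrow> b \<in> S \<Longrightarrow> \<exists>x\<in>S. m a x = b"
  by (simp add: subloop_def)

lemma lcoset_subset:
  assumes "loop Q m e" "subloop S Q m e" "x \<in> Q"
  shows "lcoset m x S \<subseteq> Q"
  using loop_closed[OF assms(1,3)] subloop_subset[OF assms(2)] unfolding lcoset_def by blast

lemma lcoset_in_Lsets: "x \<in> Q \<Longrightarrow> lcoset m x S \<in> Lsets Q m S"
  unfolding Lsets_def by (intro CollectI exI[of _ "{x}"]) auto

lemma INT_lcoset_in_Lsets: "X \<noteq> {} \<Longrightarrow> X \<subseteq> Q \<Longrightarrow> (\<Inter>x\<in>X. lcoset m x S) \<in> Lsets Q m S"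
  unfolding Lsets_def by blast

lemma INT_rcoset_in_Rsets: "X \<noteq> {} \<Longrightarrow> X \<subseteq> Q \<Longrightarrow> (\<Inter>x\<in>X. rcoset m S x) \<in> Rsets Q m S"
  unfolding Rsets_def by blast

context
  fixes Q :: "'a set" and m :: "'a \<Rightarrow> 'a \<Rightarrow> 'a" and e :: 'a
  assumes loop: "loop Q m e" and aaip: "aaip Q m e"
begin

lemma loop_inv_props:
  assumes "x \<in> Q"
  shows "loop_inv Q m e x \<in> Q" "m x (loop_inv Q m e x) = e" "m (loop_inv Q m e x) x = e"
proof -
  obtain y where y: "y \<in> Q" "m x y = e" "m y x = e"
    using aaip_inverse_exists[OF aaip assms] by blast
  have "\<exists>!z. z \<in> Q \<and> m x z = e"
    using loop_right_div_unique[OF loop assms loop_ident_in[OF loop]] .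
  then have "loop_inv Q m e x = y"
    unfolding loop_inv_def using y by (intro the_equality) auto
  then show "loop_inv Q m e x \<in> Q" "m x (loop_inv Q m e x) = e" "m (loop_inv Q m e x) x = e"
    using y by simp_all
qed

lemma loop_inv_eqI:
  assumes "x \<in> Q" "y \<in> Q" "m x y = e"
  shows "loop_inv Q m e x = y"
  using loop_right_div_unique[OF loop \<open>x \<in> Q\<close> loop_ident_in[OF loop]] loop_inv_props[OF \<open>x \<in> Q\<close>] assms
  by blast

lemma loop_inv_inv: "x \<in> Q \<Longrightarrow> loop_inv Q m e (loop_inv Q m e x) = x"
  by (intro loop_inv_eqI) (simp_all add: loop_inv_props)

lemma inj_on_loop_inv: "inj_on (loop_inv Q m e) Q"
  by (metis inj_onI loop_inv_inv)

lemma subloop_inv_closed: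
  assumes S: "subloop S Q m e" and s: "s \<in> S"
  shows "loop_inv Q m e s \<in> S"
proof -
  obtain y where "y \<in> S" "m s y = e"
    using subloop_right_div[OF S s subloop_ident_in[OF S]] by blast
  moreover have "loop_inv Q m e s = y"
    using calculation s subloop_subset[OF S] by (intro loop_inv_eqI) auto
  ultimately show ?thesis by simp
qed

lemma loop_inv_image_lcoset:
  assumes S: "subloop S Q m e" and x: "x \<in> Q"
  shows "loop_inv Q m e ` lcoset m x S = rcoset m S (loop_inv Q m e x)"
proof -
  let ?i = "loop_inv Q m e"
  have SQ: "S \<subseteq> Q" using subloop_subset[OF S] .
  have "?i ` lcoset m x S = (\<lambda>s. m (?i s) (?i x)) ` S"
    unfolding lcoset_def image_image using x SQ by (auto intro!: image_cong aaip_loop_inv_mult[OF aaip])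
  also have "\<dots> = (\<lambda>t. m t (?i x)) ` (?i ` S)"
    by (simp add: image_image)
  also have "?i ` S = S"
  proof
    show "?i ` S \<subseteq> S" using subloop_inv_closed[OF S] by blast
    show "S \<subseteq> ?i ` S"
    proof
      fix s assume "s \<in> S"
      then have "s = ?i (?i s)" "?i s \<in> S"
        using loop_inv_inv SQ subloop_inv_closed[OF S] by auto
      then show "s \<in> ?i ` S" by (rule image_eqI)
    qed
  qed
  finally show ?thesis unfolding rcoset_def .
qed

lemma loop_inv_image_INT_lcoset:
  assumes S: "subloop S Q m e" and X: "X \<noteq> {}" "X \<subseteq> Q"
  shows "loop_inv Q m e ` (\<Inter>x\<in>X. lcoset m x S) = (\<Inter>y\<in>loop_inv Q m e ` X. rcoset m S y)"
proof -
  obtain j where "j \<in> X" using X by blast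
  then have "loop_inv Q m e ` (\<Inter>x\<in>X. lcoset m x S) = (\<Inter>x\<in>X. loop_inv Q m e ` lcoset m x S)"
    using lcoset_subset[OF loop S] X(2) by (intro image_INT[OF inj_on_loop_inv]) auto
  also have "\<dots> = (\<Inter>x\<in>X. rcoset m S (loop_inv Q m e x))"
    using X(2) by (intro INF_cong refl loop_inv_image_lcoset[OF S]) auto
  finally show ?thesis by simp
qed

lemma loop_inv_image_Lsets:
  assumes S: "subloop S Q m e"
  shows "image (loop_inv Q m e) ` Lsets Q m S = Rsets Q m S"
proof -
  let ?i = "loop_inv Q m e"
  have inv_Q: "?i ` X \<subseteq> Q" "?i ` ?i ` X = X" if "X \<subseteq> Q" for X
  proof -
    show "?i ` X \<subseteq> Q" using that loop_inv_props(1) by blast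
    have "(\<lambda>x. ?i (?i x)) ` X = (\<lambda>x. x) ` X"
      using that loop_inv_inv by (intro image_cong) auto
    then show "?i ` ?i ` X = X" by (simp add: image_image)
  qed
  show ?thesis
  proof (intro equalityI subsetI)
    fix B assume "B \<in> image ?i ` Lsets Q m S"
    then obtain X where X: "X \<noteq> {}" "X \<subseteq> Q" "B = ?i ` (\<Inter>x\<in>X. lcoset m x S)"
      unfolding Lsets_def by auto
    then have "B = (\<Inter>y\<in>?i ` X. rcoset m S y)"
      by (simp add: loop_inv_image_INT_lcoset[OF S])
    then show "B \<in> Rsets Q m S"
      using INT_rcoset_in_Rsets[OF _ inv_Q(1)[OF X(2)]] X(1) by simp
  next
    fix B assume "B \<in> Rsets Q m S"
    then obtain Y where Y: "Y \<noteq> {}" "Y \<subseteq> Q" "B = (\<Inter>y\<in>Y. rcoset m S y)"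
      unfolding Rsets_def by auto
    then have "B = ?i ` (\<Inter>x\<in>?i ` Y. lcoset m x S)"
      using loop_inv_image_INT_lcoset[OF S, of "?i ` Y"] inv_Q[OF Y(2)] by simp
    moreover have "(\<Inter>x\<in>?i ` Y. lcoset m x S) \<in> Lsets Q m S"
      using INT_lcoset_in_Lsets[OF _ inv_Q(1)[OF Y(2)]] Y(1) by simp
    ultimately show "B \<in> image ?i ` Lsets Q m S" by (rule image_eqI)
  qed
qed

end

lemma Lsets_subset:
  assumes "loop Q m e" "subloop S Q m e" "A \<in> Lsets Q m S"
  shows "A \<subseteq> Q"
proof -
  obtain X where X: "X \<noteq> {}" "X \<subseteq> Q" "A = (\<Inter>x\<in>X. lcoset m x S)"
    using assms(3) unfolding Lsets_def by auto
  then obtain x where "x \<in> X" by blast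
  then have "A \<subseteq> lcoset m x S" using X(3) by blast
  also have "\<dots> \<subseteq> Q" using lcoset_subset[OF assms(1,2)] \<open>x \<in> X\<close> X(2) by blast
  finally show ?thesis .
qed

lemma Lsets_Int_closed: "\<forall>A\<in>Lsets Q m S. \<forall>B\<in>Lsets Q m S. A \<inter> B \<in> Lsets Q m S"
proof (intro ballI)
  fix A B assume "A \<in> Lsets Q m S" "B \<in> Lsets Q m S"
  then obtain X Y where "X \<noteq> {}" "X \<subseteq> Q" "A = (\<Inter>x\<in>X. lcoset m x S)"
    and "Y \<noteq> {}" "Y \<subseteq> Q" "B = (\<Inter>x\<in>Y. lcoset m x S)"
    unfolding Lsets_def by blast
  then show "A \<inter> B \<in> Lsets Q m S"
    using INT_lcoset_in_Lsets[of "X \<union> Y" Q m S] by (simp add: INT_Un)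
qed

lemma meet_iso_image:
  assumes "inj_on f (\<Union>L)"
  shows "meet_iso (image f) L (image f ` L)"
  unfolding meet_iso_def bij_betw_def
proof (intro conjI ballI refl)
  show "inj_on (image f) L"
    using assms by (intro inj_onI) (metis Sup_upper inj_on_image_eq_iff)
  show "f ` (A \<inter> B) = f ` A \<inter> f ` B" if "A \<in> L" "B \<in> L" for A B
    using that by (intro inj_on_image_Int[OF assms]) auto
qed

lemma meet_preserving_eq_on_INT:
  assumes "finite X" "X \<noteq> {}" "\<forall>x\<in>X. f x \<in> L"
    and closed: "\<forall>A\<in>L. \<forall>B\<in>L. A \<inter> B \<in> L"
    and g: "\<forall>A\<in>L. \<forall>B\<in>L. g (A \<inter> B) = g A \<inter> g B"
    and h: "\<forall>A\<in>L. \<forall>B\<in>L. h (A \<inter> B) = h A \<inter> h B"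
    and agree: "\<forall>x\<in>X. g (f x) = h (f x)"
  shows "g (\<Inter>x\<in>X. f x) = h (\<Inter>x\<in>X. f x)"
proof -
  have "g (\<Inter>x\<in>X. f x) = h (\<Inter>x\<in>X. f x) \<and> (\<Inter>x\<in>X. f x) \<in> L"
    using assms(1-3) agree
  proof (induction X rule: finite_ne_induct)
    case (insert a X)
    then show ?case using g h closed by simp
  qed simp
  then show ?thesis ..
qed

lemma meet_iso_unique_on_lcosets:
  assumes "finite Q"
    and "meet_iso g (Lsets Q m S) R" "meet_iso h (Lsets Q m S) R'"
    and "\<forall>x\<in>Q. g (lcoset m x S) = h (lcoset m x S)"
    and "A \<in> Lsets Q m S"
  shows "g A = h A"
proof -
  obtain X where X: "X \<noteq> {}" "X \<subseteq> Q" "A = (\<Inter>x\<in>X. lcoset m x S)"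
    using assms(5) unfolding Lsets_def by auto
  have "\<forall>x\<in>X. lcoset m x S \<in> Lsets Q m S" "\<forall>x\<in>X. g (lcoset m x S) = h (lcoset m x S)"
    using X(2) lcoset_in_Lsets[of _ Q m S] assms(4) by auto
  moreover have "\<forall>A\<in>Lsets Q m S. \<forall>B\<in>Lsets Q m S. g (A \<inter> B) = g A \<inter> g B"
    "\<forall>A\<in>Lsets Q m S. \<forall>B\<in>Lsets Q m S. h (A \<inter> B) = h A \<inter> h B"
    using assms(2,3) by (simp_all add: meet_iso_def)
  ultimately show ?thesis
    using meet_preserving_eq_on_INT[OF finite_subset[OF X(2) assms(1)] X(1) _ Lsets_Int_closed,
        where f = "\<lambda>x. lcoset m x S" and g = g and h = h] X(3) by simp
qed

theorem proposition3p3: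
  fixes Q S :: "'a set" and m :: "'a \<Rightarrow> 'a \<Rightarrow> 'a" and e :: 'a
  assumes "loop Q m e" and "finite Q" and "aaip Q m e" and "subloop S Q m e"
  shows "(\<forall>x\<in>Q. \<forall>y\<in>Q. lcoset m x S = lcoset m y S \<longrightarrow>
            rcoset m S (loop_inv Q m e x) = rcoset m S (loop_inv Q m e y))
       \<and> (\<exists>g. meet_iso g (Lsets Q m S) (Rsets Q m S)
              \<and> (\<forall>x\<in>Q. g (lcoset m x S) = rcoset m S (loop_inv Q m e x))
              \<and> (\<forall>g'. meet_iso g' (Lsets Q m S) (Rsets Q m S)
                      \<and> (\<forall>x\<in>Q. g' (lcoset m x S) = rcoset m S (loop_inv Q m e x))
                      \<longrightarrow> (\<forall>A\<in>Lsets Q m S. g' A = g A)))"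
proof -
  note loop = assms(1) and aaip = assms(3) and S = assms(4)
  let ?g = "image (loop_inv Q m e)"
  have on_cosets: "\<forall>x\<in>Q. ?g (lcoset m x S) = rcoset m S (loop_inv Q m e x)"
    using loop_inv_image_lcoset[OF loop aaip S] by blast
  have "\<Union>(Lsets Q m S) \<subseteq> Q"
    using Lsets_subset[OF loop S] by blast
  then have "inj_on (loop_inv Q m e) (\<Union>(Lsets Q m S))"
    by (rule inj_on_subset[OF inj_on_loop_inv[OF loop aaip]])
  then have iso: "meet_iso ?g (Lsets Q m S) (Rsets Q m S)"
    using meet_iso_image loop_inv_image_Lsets[OF loop aaip S] by metis
  have unique: "g' A = ?g A"
    if "meet_iso g' (Lsets Q m S) (Rsets Q m S)"
      and "\<forall>x\<in>Q. g' (lcoset m x S) = rcoset m S (loop_inv Q m e x)"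
      and "A \<in> Lsets Q m S" for g' A
    using meet_iso_unique_on_lcosets[OF assms(2) that(1) iso _ that(3)] that(2) on_cosets by simp
  show ?thesis
    using on_cosets iso unique by (intro conjI exI[of _ ?g]) metis+
qed

end
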